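(* (i) A geometric sequent $\sigma$ over the signature of $\mathbb{L}_u$ is valid in all abelian $\ell$-groups with strong unit in $\mathbf{Set}$ if and only if it is provable in $\mathbb{L}_u$. (ii) For any family $\{\phi_i\}_{i\in I}$ of geometric sentences over the signature of $\mathbb{L}_u$, the sequent $\top\vdash\bigvee_{i\in I}\phi_i$ is provable in $\mathbb{L}_u$ (equivalently, every abelian $\ell$-group with strong unit in $\mathbf{Set}$ satisfies at least one $\phi_i$) if and only if there exists a finite subset $J\subseteq I$ such that $\top\vdash\bigvee_{i\in J}\phi_i$ is provable in $\mathbb{L}_u$ (equivalently, every abelian $\ell$-group with strong unit in $\mathbf{Set}$ satisfies at least one $\phi_i$ with $i\in J$).
   Context: $\mathbb{L}_u$ is the one-sorted geometric theory over the signature with function symbols $+,-,\sup,\inf$, relation symbol $\le$ and constants $0,u$, with axioms: $(+,-,0)$ is an abelian group; $\le$ is a partial order; $\inf,\sup$ are binary infimum and supremum; $x\le y\vdash_{x,y,t}t+x\le t+y$; $\top\vdash u\ge0$; $x\ge0\vdash_x\bigvee_{n\in\mathbb{N}}x\le nu$. Provability is in geometric logic (formulae built from atomic ones using finite conjunctions, arbitrary disjunctions and existential quantification). A geometric sentence is a geometric formula with no free variables. *)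

theory Defs
  imports Main
begin

datatype trm = Var nat | Zero | U | Plus trm trm | Neg trm | Sup trm trm | Inf trm trm

text \<open>Geometric formulas; arbitrary disjunctions are indexed by subsets of the type 'i.
  Disj I F denotes the disjunction of the F i for i in I (empty I gives falsity).
  Ex binds the de Bruijn variable 0.\<close>
datatype 'i fm = Eq trm trm | Le trm trm | Top | Conj "'i fm" "'i fm"
  | Disj "'i set" "'i \<Rightarrow> 'i fm" | Ex "'i fm"

primrec trm_subst :: "(nat \<Rightarrow> trm) \<Rightarrow> trm \<Rightarrow> trm" where
  "trm_subst s (Var n) = s n"
| "trm_subst s Zero = Zero"
| "trm_subst s U = U"
| "trm_subst s (Plus a b) = Plus (trm_subst s a) (trm_subst s b)"
| "trm_subst s (Neg a) = Neg (trm_subst s a)"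
| "trm_subst s (Sup a b) = Sup (trm_subst s a) (trm_subst s b)"
| "trm_subst s (Inf a b) = Inf (trm_subst s a) (trm_subst s b)"

definition lift_subst :: "(nat \<Rightarrow> trm) \<Rightarrow> nat \<Rightarrow> trm" where
  "lift_subst s n = (case n of 0 \<Rightarrow> Var 0 | Suc m \<Rightarrow> trm_subst (\<lambda>k. Var (Suc k)) (s m))"

primrec fm_subst :: "(nat \<Rightarrow> trm) \<Rightarrow> 'i fm \<Rightarrow> 'i fm" where
  "fm_subst s (Eq a b) = Eq (trm_subst s a) (trm_subst s b)"
| "fm_subst s (Le a b) = Le (trm_subst s a) (trm_subst s b)"
| "fm_subst s Top = Top"
| "fm_subst s (Conj p q) = Conj (fm_subst s p) (fm_subst s q)"
| "fm_subst s (Disj I F) = Disj I (\<lambda>i. fm_subst s (F i))"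
| "fm_subst s (Ex p) = Ex (fm_subst (lift_subst s) p)"

definition lift_fm :: "'i fm \<Rightarrow> 'i fm" where
  "lift_fm p = fm_subst (\<lambda>n. Var (Suc n)) p"

primrec trm_closed :: "nat \<Rightarrow> trm \<Rightarrow> bool" where
  "trm_closed k (Var n) = (n < k)"
| "trm_closed k Zero = True"
| "trm_closed k U = True"
| "trm_closed k (Plus a b) = (trm_closed k a \<and> trm_closed k b)"
| "trm_closed k (Neg a) = trm_closed k a"
| "trm_closed k (Sup a b) = (trm_closed k a \<and> trm_closed k b)"
| "trm_closed k (Inf a b) = (trm_closed k a \<and> trm_closed k b)"

primrec fm_closed :: "nat \<Rightarrow> 'i fm \<Rightarrow> bool" where
  "fm_closed k (Eq a b) = (trm_closed k a \<and> trm_closed k b)"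
| "fm_closed k (Le a b) = (trm_closed k a \<and> trm_closed k b)"
| "fm_closed k Top = True"
| "fm_closed k (Conj p q) = (fm_closed k p \<and> fm_closed k q)"
| "fm_closed k (Disj I F) = (\<forall>i\<in>I. fm_closed k (F i))"
| "fm_closed k (Ex p) = fm_closed (Suc k) p"

definition sentence :: "'i fm \<Rightarrow> bool" where
  "sentence p = fm_closed 0 p"

primrec nu :: "nat \<Rightarrow> trm" where
  "nu 0 = Zero"
| "nu (Suc n) = Plus (nu n) U"

abbreviation "vx \<equiv> Var 0"
abbreviation "vy \<equiv> Var 1"
abbreviation "vz \<equiv> Var 2"

text \<open>Axioms of L_u, as sequents (antecedent, consequent).\<close>
inductive Lu_ax :: "'i fm \<Rightarrow> 'i fm \<Rightarrow> bool" where
  ax_assoc: "Lu_ax Top (Eq (Plus (Plus vx vy) vz) (Plus vx (Plus vy vz)))"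
| ax_comm: "Lu_ax Top (Eq (Plus vx vy) (Plus vy vx))"
| ax_zero: "Lu_ax Top (Eq (Plus vx Zero) vx)"
| ax_neg: "Lu_ax Top (Eq (Plus vx (Neg vx)) Zero)"
| ax_refl: "Lu_ax Top (Le vx vx)"
| ax_trans: "Lu_ax (Conj (Le vx vy) (Le vy vz)) (Le vx vz)"
| ax_antisym: "Lu_ax (Conj (Le vx vy) (Le vy vx)) (Eq vx vy)"
| ax_inf1: "Lu_ax Top (Le (Inf vx vy) vx)"
| ax_inf2: "Lu_ax Top (Le (Inf vx vy) vy)"
| ax_inf3: "Lu_ax (Conj (Le vz vx) (Le vz vy)) (Le vz (Inf vx vy))"
| ax_sup1: "Lu_ax Top (Le vx (Sup vx vy))"
| ax_sup2: "Lu_ax Top (Le vy (Sup vx vy))"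
| ax_sup3: "Lu_ax (Conj (Le vx vz) (Le vy vz)) (Le (Sup vx vy) vz)"
| ax_transl: "Lu_ax (Le vx vy) (Le (Plus vz vx) (Plus vz vy))"
| ax_unit_pos: "Lu_ax Top (Le Zero U)"
| ax_strong_unit: "F ` I = range (\<lambda>n. Le vx (nu n)) \<Longrightarrow> Lu_ax (Le Zero vx) (Disj I F)"

text \<open>Derivability in geometric logic (Johnstone, Elephant D1.3.1) from the axioms of L_u.
  Sequents carry no explicit context: every structure has nonempty carrier (it contains 0).\<close>
inductive Lu_prov :: "'i fm \<Rightarrow> 'i fm \<Rightarrow> bool" where
  axiom: "Lu_ax p q \<Longrightarrow> Lu_prov p q"
| ident: "Lu_prov p p"
| cut: "Lu_prov p q \<Longrightarrow> Lu_prov q r \<Longrightarrow> Lu_prov p r"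
| subst: "Lu_prov p q \<Longrightarrow> Lu_prov (fm_subst s p) (fm_subst s q)"
| eq_refl: "Lu_prov Top (Eq vx vx)"
| eq_subst: "Lu_prov (Conj (Eq (Var x) (Var y)) p) (fm_subst (Var(x := Var y)) p)"
| top_intro: "Lu_prov p Top"
| conj_e1: "Lu_prov (Conj p q) p"
| conj_e2: "Lu_prov (Conj p q) q"
| conj_i: "Lu_prov p q \<Longrightarrow> Lu_prov p r \<Longrightarrow> Lu_prov p (Conj q r)"
| disj_i: "i \<in> I \<Longrightarrow> Lu_prov (F i) (Disj I F)"
| disj_e: "(\<And>i. i \<in> I \<Longrightarrow> Lu_prov (F i) q) \<Longrightarrow> Lu_prov (Disj I F) q"
| ex_e: "Lu_prov p (lift_fm q) \<Longrightarrow> Lu_prov (Ex p) q"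
| ex_i: "Lu_prov (Ex p) q \<Longrightarrow> Lu_prov p (lift_fm q)"
| distrib: "Lu_prov (Conj p (Disj I F)) (Disj I (\<lambda>i. Conj p (F i)))"
| frobenius: "Lu_prov (Conj p (Ex q)) (Ex (Conj (lift_fm p) q))"

record 'a lstr =
  l_carrier :: "'a set"
  l_zero :: 'a
  l_unit :: 'a
  l_add :: "'a \<Rightarrow> 'a \<Rightarrow> 'a"
  l_neg :: "'a \<Rightarrow> 'a"
  l_sup :: "'a \<Rightarrow> 'a \<Rightarrow> 'a"
  l_inf :: "'a \<Rightarrow> 'a \<Rightarrow> 'a"
  l_le :: "'a \<Rightarrow> 'a \<Rightarrow> bool"

definition l_nu :: "('a, 'b) lstr_scheme \<Rightarrow> nat \<Rightarrow> 'a" where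
  "l_nu M n = ((\<lambda>x. l_add M x (l_unit M)) ^^ n) (l_zero M)"

definition unital_lgroup :: "('a, 'b) lstr_scheme \<Rightarrow> bool" where
  "unital_lgroup M \<longleftrightarrow>
    (let C = l_carrier M; z = l_zero M; u = l_unit M; pl = l_add M; ng = l_neg M;
         sp = l_sup M; nf = l_inf M; le = l_le M in
     z \<in> C \<and> u \<in> C \<and>
     (\<forall>x\<in>C. \<forall>y\<in>C. pl x y \<in> C \<and> sp x y \<in> C \<and> nf x y \<in> C) \<and> (\<forall>x\<in>C. ng x \<in> C) \<and>
     \<comment> \<open>abelian group\<close>
     (\<forall>x\<in>C. \<forall>y\<in>C. \<forall>w\<in>C. pl (pl x y) w = pl x (pl y w)) \<and>
     (\<forall>x\<in>C. \<forall>y\<in>C. pl x y = pl y x) \<and>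
     (\<forall>x\<in>C. pl x z = x) \<and> (\<forall>x\<in>C. pl x (ng x) = z) \<and>
     \<comment> \<open>partial order\<close>
     (\<forall>x\<in>C. le x x) \<and>
     (\<forall>x\<in>C. \<forall>y\<in>C. \<forall>w\<in>C. le x y \<and> le y w \<longrightarrow> le x w) \<and>
     (\<forall>x\<in>C. \<forall>y\<in>C. le x y \<and> le y x \<longrightarrow> x = y) \<and>
     \<comment> \<open>binary supremum and infimum\<close>
     (\<forall>x\<in>C. \<forall>y\<in>C. le x (sp x y) \<and> le y (sp x y) \<and>
        (\<forall>w\<in>C. le x w \<and> le y w \<longrightarrow> le (sp x y) w)) \<and>
     (\<forall>x\<in>C. \<forall>y\<in>C. le (nf x y) x \<and> le (nf x y) y \<and>
        (\<forall>w\<in>C. le w x \<and> le w y \<longrightarrow> le w (nf x y))) \<and>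
     \<comment> \<open>translation invariance\<close>
     (\<forall>x\<in>C. \<forall>y\<in>C. \<forall>t\<in>C. le x y \<longrightarrow> le (pl t x) (pl t y)) \<and>
     \<comment> \<open>strong unit\<close>
     le z u \<and> (\<forall>x\<in>C. le z x \<longrightarrow> (\<exists>n. le x (l_nu M n))))"

primrec eval :: "('a, 'b) lstr_scheme \<Rightarrow> (nat \<Rightarrow> 'a) \<Rightarrow> trm \<Rightarrow> 'a" where
  "eval M v (Var n) = v n"
| "eval M v Zero = l_zero M"
| "eval M v U = l_unit M"
| "eval M v (Plus a b) = l_add M (eval M v a) (eval M v b)"
| "eval M v (Neg a) = l_neg M (eval M v a)"
| "eval M v (Sup a b) = l_sup M (eval M v a) (eval M v b)"
| "eval M v (Inf a b) = l_inf M (eval M v a) (eval M v b)"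

definition cons_val :: "'a \<Rightarrow> (nat \<Rightarrow> 'a) \<Rightarrow> nat \<Rightarrow> 'a" where
  "cons_val a v n = (case n of 0 \<Rightarrow> a | Suc m \<Rightarrow> v m)"

primrec sat :: "('a, 'b) lstr_scheme \<Rightarrow> (nat \<Rightarrow> 'a) \<Rightarrow> 'i fm \<Rightarrow> bool" where
  "sat M v (Eq a b) = (eval M v a = eval M v b)"
| "sat M v (Le a b) = l_le M (eval M v a) (eval M v b)"
| "sat M v Top = True"
| "sat M v (Conj p q) = (sat M v p \<and> sat M v q)"
| "sat M v (Disj I F) = (\<exists>i\<in>I. sat M v (F i))"
| "sat M v (Ex p) = (\<exists>a\<in>l_carrier M. sat M (cons_val a v) p)"

definition valid_in :: "('a, 'b) lstr_scheme \<Rightarrow> 'i fm \<Rightarrow> 'i fm \<Rightarrow> bool" where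
  "valid_in M p q \<longleftrightarrow> (\<forall>v. (\<forall>n. v n \<in> l_carrier M) \<longrightarrow> sat M v p \<longrightarrow> sat M v q)"

end

theory Submission
  imports Defs "HOL-Library.Countable"
begin

text \<open>Suppose p does not prove q. Choosing a suitable disjunct of every disjunction and
  fresh variables as witnesses for the existentials, p is refined to a finite conjunction c of atoms with c proving p but not q.
  Since the strong unit axiom is a disjunction over all n, for every term t some bound
  sup(t, 0) \<le> n u can be added to c while q stays unprovable; adding such bounds along an
  enumeration of all terms gives a theory whose term model is an abelian l-group with strong
  unit in which c holds and q fails. For (ii): the integers with unit 1 form an initial
  unital l-group and geometric sentences are preserved by homomorphisms, so if a disjunction
  of sentences holds in every model, one disjunct holds in the integers and hence in every
  model; by (i) the same is true of provability.\<close>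

definition comp_subst :: "(nat \<Rightarrow> trm) \<Rightarrow> (nat \<Rightarrow> trm) \<Rightarrow> nat \<Rightarrow> trm" where
  "comp_subst \<tau> \<sigma> n = trm_subst \<tau> (\<sigma> n)"

lemma trm_subst_trm_subst: "trm_subst \<tau> (trm_subst \<sigma> t) = trm_subst (comp_subst \<tau> \<sigma>) t"
  by (induction t) (auto simp: comp_subst_def)

lemma lift_subst_comp_subst:
  "lift_subst (comp_subst \<tau> \<sigma>) = comp_subst (lift_subst \<tau>) (lift_subst \<sigma>)"
proof
  fix n
  have "comp_subst (lift_subst \<tau>) (\<lambda>k. Var (Suc k)) = comp_subst (\<lambda>k. Var (Suc k)) \<tau>"
    by (auto simp: comp_subst_def lift_subst_def)
  then show "lift_subst (comp_subst \<tau> \<sigma>) n = comp_subst (lift_subst \<tau>) (lift_subst \<sigma>) n"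
    by (cases n) (simp_all add: lift_subst_def comp_subst_def trm_subst_trm_subst)
qed

lemma fm_subst_fm_subst: "fm_subst \<tau> (fm_subst \<sigma> p) = fm_subst (comp_subst \<tau> \<sigma>) p"
  by (induction p arbitrary: \<sigma> \<tau>) (auto simp: trm_subst_trm_subst lift_subst_comp_subst)

lemma trm_subst_Var [simp]: "trm_subst Var t = t"
  by (induction t) auto

lemma lift_subst_Var [simp]: "lift_subst Var = Var"
  by (auto simp: lift_subst_def split: nat.split)

lemma fm_subst_Var [simp]: "fm_subst Var p = p"
  by (induction p) auto

lemma trm_subst_nu [simp]: "trm_subst s (nu n) = nu n"
  by (induction n) auto

lemma comp_subst_case_nat_Suc [simp]: "comp_subst (case_nat t \<sigma>) (\<lambda>n. Var (Suc n)) = \<sigma>"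
  by (auto simp: comp_subst_def)

lemma comp_subst_case_nat_lift_subst:
  "comp_subst (case_nat t Var) (lift_subst \<sigma>) = case_nat t \<sigma>"
proof
  fix n show "comp_subst (case_nat t Var) (lift_subst \<sigma>) n = case_nat t \<sigma> n"
    by (cases n) (simp_all add: comp_subst_def lift_subst_def trm_subst_trm_subst)
qed

definition shift_fm :: "nat \<Rightarrow> 'i fm \<Rightarrow> 'i fm" where
  "shift_fm k p = fm_subst (\<lambda>n. Var (n + k)) p"

lemma lift_fm_eq_shift_fm: "lift_fm p = shift_fm 1 p"
  by (simp add: lift_fm_def shift_fm_def)

lemma shift_fm_0 [simp]: "shift_fm 0 p = p"
  by (simp add: shift_fm_def)

lemma shift_fm_shift_fm: "shift_fm j (shift_fm k p) = shift_fm (k + j) p"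
proof -
  have "comp_subst (\<lambda>n. Var (n + j)) (\<lambda>n. Var (n + k)) = (\<lambda>n. Var (n + (k + j)))"
    by (auto simp: comp_subst_def add.assoc)
  then show ?thesis by (simp add: shift_fm_def fm_subst_fm_subst)
qed

lemma shift_fm_simps [simp]:
  "shift_fm k Top = Top"
  "shift_fm k (Conj p q) = Conj (shift_fm k p) (shift_fm k q)"
  "shift_fm k (Disj I F) = Disj I (\<lambda>i. shift_fm k (F i))"
  by (auto simp: shift_fm_def)

lemma shift_fm_fm_subst: "shift_fm k (fm_subst \<sigma> p) = fm_subst (comp_subst (\<lambda>n. Var (n + k)) \<sigma>) p"
  by (simp add: shift_fm_def fm_subst_fm_subst)

lemma eval_trm_subst: "eval M v (trm_subst s t) = eval M (\<lambda>n. eval M v (s n)) t"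
  by (induction t) auto

lemma eval_nu: "eval M v (nu n) = l_nu M n"
  by (induction n) (auto simp: l_nu_def)

lemma cons_val_Suc [simp]: "(\<lambda>n. cons_val a v (Suc n)) = v"
  by (simp add: cons_val_def)

lemma cons_val_0_Suc: "cons_val (v 0) (\<lambda>n. v (Suc n)) = v"
  by (auto simp: cons_val_def split: nat.split)

lemma cons_val_in_carrier:
  "a \<in> A \<Longrightarrow> \<forall>n. v n \<in> A \<Longrightarrow> \<forall>n. cons_val a v n \<in> A"
  by (simp add: cons_val_def split: nat.split)

lemma sat_fm_subst: "sat M v (fm_subst s p) = sat M (\<lambda>n. eval M v (s n)) p"
proof (induction p arbitrary: v s)
  case (Ex p)
  have "(\<lambda>n. eval M (cons_val a v) (lift_subst s n)) = cons_val a (\<lambda>n. eval M v (s n))" for a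
  proof
    fix n show "eval M (cons_val a v) (lift_subst s n) = cons_val a (\<lambda>n. eval M v (s n)) n"
      by (cases n) (auto simp: lift_subst_def cons_val_def eval_trm_subst)
  qed
  then show ?case using Ex by simp
qed (auto simp: eval_trm_subst)

lemma eval_trm_closed:
  "trm_closed k t \<Longrightarrow> \<forall>n<k. v n = v' n \<Longrightarrow> eval M v t = eval M v' t"
  by (induction t) auto

lemma sat_fm_closed:
  "fm_closed k p \<Longrightarrow> \<forall>n<k. v n = v' n \<Longrightarrow> sat M v p = sat M v' p"
proof (induction p arbitrary: k v v')
  case (Ex p)
  have "sat M (cons_val a v) p = sat M (cons_val a v') p" for a
  proof (rule Ex.IH)
    show "fm_closed (Suc k) p" using Ex.prems(1) by simp
    show "\<forall>n<Suc k. cons_val a v n = cons_val a v' n"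
      using Ex.prems(2) by (auto simp: cons_val_def split: nat.split)
  qed
  then show ?case by simp
next
  case (Conj p q)
  then show ?case using Conj.IH[of k v v'] by simp
next
  case (Disj I F)
  have "sat M v (F i) = sat M v' (F i)" if "i \<in> I" for i
    using that Disj.IH[of "F i" k v v'] Disj.prems by simp
  then show ?case by simp
next
  case (Eq a b)
  then show ?case using eval_trm_closed[of k _ v v' M] by simp
next
  case (Le a b)
  then show ?case using eval_trm_closed[of k _ v v' M] by simp
qed simp

lemma sentence_sat_iff: "sentence p \<Longrightarrow> sat M v p = sat M v' p"
  unfolding sentence_def using sat_fm_closed by blast

locale ulgroup =
  fixes M :: "('a, 'b) lstr_scheme"
  assumes zero_closed: "l_zero M \<in> l_carrier M"
    and unit_closed: "l_unit M \<in> l_carrier M"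
    and add_closed: "\<And>x y. x \<in> l_carrier M \<Longrightarrow> y \<in> l_carrier M \<Longrightarrow> l_add M x y \<in> l_carrier M"
    and sup_closed: "\<And>x y. x \<in> l_carrier M \<Longrightarrow> y \<in> l_carrier M \<Longrightarrow> l_sup M x y \<in> l_carrier M"
    and inf_closed: "\<And>x y. x \<in> l_carrier M \<Longrightarrow> y \<in> l_carrier M \<Longrightarrow> l_inf M x y \<in> l_carrier M"
    and neg_closed: "\<And>x. x \<in> l_carrier M \<Longrightarrow> l_neg M x \<in> l_carrier M"
    and l_add_assoc: "\<And>x y w. x \<in> l_carrier M \<Longrightarrow> y \<in> l_carrier M \<Longrightarrow> w \<in> l_carrier M \<Longrightarrow>
      l_add M (l_add M x y) w = l_add M x (l_add M y w)"
    and l_add_commute: "\<And>x y. x \<in> l_carrier M \<Longrightarrow> y \<in> l_carrier M \<Longrightarrow> l_add M x y = l_add M y x"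
    and l_add_zero: "\<And>x. x \<in> l_carrier M \<Longrightarrow> l_add M x (l_zero M) = x"
    and l_add_neg: "\<And>x. x \<in> l_carrier M \<Longrightarrow> l_add M x (l_neg M x) = l_zero M"
    and l_le_refl: "\<And>x. x \<in> l_carrier M \<Longrightarrow> l_le M x x"
    and l_le_trans: "\<And>x y w. x \<in> l_carrier M \<Longrightarrow> y \<in> l_carrier M \<Longrightarrow> w \<in> l_carrier M \<Longrightarrow>
      l_le M x y \<Longrightarrow> l_le M y w \<Longrightarrow> l_le M x w"
    and l_le_antisym: "\<And>x y. x \<in> l_carrier M \<Longrightarrow> y \<in> l_carrier M \<Longrightarrow>
      l_le M x y \<Longrightarrow> l_le M y x \<Longrightarrow> x = y"
    and l_sup_upper1: "\<And>x y. x \<in> l_carrier M \<Longrightarrow> y \<in> l_carrier M \<Longrightarrow> l_le M x (l_sup M x y)"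
    and l_sup_upper2: "\<And>x y. x \<in> l_carrier M \<Longrightarrow> y \<in> l_carrier M \<Longrightarrow> l_le M y (l_sup M x y)"
    and l_sup_least: "\<And>x y w. x \<in> l_carrier M \<Longrightarrow> y \<in> l_carrier M \<Longrightarrow> w \<in> l_carrier M \<Longrightarrow>
      l_le M x w \<Longrightarrow> l_le M y w \<Longrightarrow> l_le M (l_sup M x y) w"
    and l_inf_lower1: "\<And>x y. x \<in> l_carrier M \<Longrightarrow> y \<in> l_carrier M \<Longrightarrow> l_le M (l_inf M x y) x"
    and l_inf_lower2: "\<And>x y. x \<in> l_carrier M \<Longrightarrow> y \<in> l_carrier M \<Longrightarrow> l_le M (l_inf M x y) y"
    and l_inf_greatest: "\<And>x y w. x \<in> l_carrier M \<Longrightarrow> y \<in> l_carrier M \<Longrightarrow> w \<in> l_carrier M \<Longrightarrow>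
      l_le M w x \<Longrightarrow> l_le M w y \<Longrightarrow> l_le M w (l_inf M x y)"
    and l_add_left_mono: "\<And>x y t. x \<in> l_carrier M \<Longrightarrow> y \<in> l_carrier M \<Longrightarrow> t \<in> l_carrier M \<Longrightarrow>
      l_le M x y \<Longrightarrow> l_le M (l_add M t x) (l_add M t y)"
    and zero_le_unit: "l_le M (l_zero M) (l_unit M)"
    and strong_unit: "\<And>x. x \<in> l_carrier M \<Longrightarrow> l_le M (l_zero M) x \<Longrightarrow> \<exists>n. l_le M x (l_nu M n)"

lemma ulgroupI: "unital_lgroup M \<Longrightarrow> ulgroup M"
  unfolding unital_lgroup_def Let_def by (rule ulgroup.intro) (elim conjE; meson)+

lemma (in ulgroup) unital_lgroup: "unital_lgroup M"
  unfolding unital_lgroup_def Let_def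
  by (intro conjI ballI impI)
    (meson zero_closed unit_closed add_closed sup_closed inf_closed neg_closed
      l_add_assoc l_add_commute l_add_zero l_add_neg l_le_refl l_le_trans l_le_antisym
      l_sup_upper1 l_sup_upper2 l_sup_least l_inf_lower1 l_inf_lower2 l_inf_greatest
      l_add_left_mono zero_le_unit strong_unit)+

lemma (in ulgroup) eval_closed: "\<forall>n. v n \<in> l_carrier M \<Longrightarrow> eval M v t \<in> l_carrier M"
  by (induction t) (auto simp: zero_closed unit_closed add_closed neg_closed sup_closed inf_closed)

section \<open>Soundness\<close>

lemma (in ulgroup) Lu_ax_sound:
  "Lu_ax p q \<Longrightarrow> \<forall>n. v n \<in> l_carrier M \<Longrightarrow> sat M v p \<Longrightarrow> sat M v q"
proof (induction rule: Lu_ax.induct)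
  case (ax_strong_unit F I)
  then obtain n where "l_le M (v 0) (l_nu M n)"
    using strong_unit[of "v 0"] by auto
  moreover obtain i where "i \<in> I" "F i = Le vx (nu n)"
    using ax_strong_unit(1) by (metis (mono_tags, lifting) imageE rangeI)
  ultimately show ?case by (force simp: eval_nu)
next
  case ax_trans
  then show ?case using l_le_trans[of "v 0" "v 1" "v 2"] by (simp add: numeral_2_eq_2)
next
  case ax_antisym
  then show ?case using l_le_antisym[of "v 0" "v 1"] by (simp add: numeral_2_eq_2)
next
  case ax_inf3
  then show ?case using l_inf_greatest[of "v 0" "v 1" "v 2"] by (simp add: numeral_2_eq_2)
next
  case ax_sup3
  then show ?case using l_sup_least[of "v 0" "v 1" "v 2"] by (simp add: numeral_2_eq_2)
next
  case ax_transl
  then show ?case using l_add_left_mono[of "v 0" "v 1" "v 2"] by (simp add: numeral_2_eq_2)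
qed (simp_all add: l_add_assoc l_add_commute l_add_zero l_add_neg l_le_refl
  l_sup_upper1 l_sup_upper2 l_inf_lower1 l_inf_lower2 zero_le_unit)

lemma (in ulgroup) Lu_prov_sound:
  "Lu_prov p q \<Longrightarrow> \<forall>n. v n \<in> l_carrier M \<Longrightarrow> sat M v p \<Longrightarrow> sat M v q"
proof (induction arbitrary: v rule: Lu_prov.induct)
  case (axiom p q)
  then show ?case using Lu_ax_sound by blast
next
  case (subst p q s)
  then show ?case by (auto simp: sat_fm_subst eval_closed)
next
  case (eq_subst x y p)
  then have "(\<lambda>n. eval M v ((Var(x := Var y)) n)) = v" by auto
  then show ?case using eq_subst by (auto simp: sat_fm_subst)
next
  case (ex_e p q)
  then obtain a where a: "a \<in> l_carrier M" "sat M (cons_val a v) p" by auto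
  then show ?case
    using ex_e.IH[of "cons_val a v"] ex_e.prems cons_val_in_carrier[of a]
    by (simp add: lift_fm_def sat_fm_subst)
next
  case (ex_i p q)
  then have "sat M (\<lambda>n. v (Suc n)) (Ex p)"
    by (auto simp: cons_val_0_Suc intro!: bexI[of _ "v 0"])
  then have "sat M (\<lambda>n. v (Suc n)) q" using ex_i by auto
  then show ?case by (simp add: lift_fm_def sat_fm_subst)
next
  case (frobenius p q)
  then show ?case by (auto simp: lift_fm_def sat_fm_subst)
qed auto

theorem valid_if_Lu_prov: "Lu_prov p q \<Longrightarrow> unital_lgroup M \<Longrightarrow> valid_in M p q"
  unfolding valid_in_def using ulgroup.Lu_prov_sound[OF ulgroupI] by blast

lemma Lu_prov_Top_subst: "Lu_prov Top q \<Longrightarrow> Lu_prov Top (fm_subst s q)"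
  using subst[of Top q s] by simp

lemma Lu_prov_Ex_intro: "Lu_prov (fm_subst (case_nat t Var) p) (Ex p)"
proof -
  have "Lu_prov p (lift_fm (Ex p))" by (rule ex_i[OF ident])
  from subst[OF this, of "case_nat t Var"] show ?thesis
    by (simp add: lift_fm_def fm_subst_fm_subst del: fm_subst.simps)
qed

lemma Lu_prov_Leibniz: "Lu_prov (Conj (Eq a b) (fm_subst (s(0 := a)) p)) (fm_subst (s(0 := b)) p)"
proof -
  \<comment> \<open>shift0 frees variable 1 for b, so that eq_subst applies to variables 0 and 1\<close>
  define shift0 where "shift0 n = (if n = 0 then Var 0 else Var (Suc n))" for n
  define \<tau> where "\<tau> n = (if n = 0 then a else if n = 1 then b else s (n - 1))" for n
  have "Lu_prov (fm_subst \<tau> (Conj (Eq (Var 0) (Var 1)) (fm_subst shift0 p)))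
      (fm_subst \<tau> (fm_subst (Var(0 := Var 1)) (fm_subst shift0 p)))"
    by (rule subst[OF eq_subst])
  then have "Lu_prov (Conj (Eq a b) (fm_subst (comp_subst \<tau> shift0) p))
      (fm_subst (comp_subst \<tau> (comp_subst (Var(0 := Var 1)) shift0)) p)"
    by (simp add: fm_subst_fm_subst \<tau>_def)
  moreover have "comp_subst \<tau> shift0 = s(0 := a)"
    by (auto simp: comp_subst_def shift0_def \<tau>_def)
  moreover have "comp_subst \<tau> (comp_subst (Var(0 := Var 1)) shift0) = s(0 := b)"
    by (auto simp: comp_subst_def shift0_def \<tau>_def)
  ultimately show ?thesis by simp
qed

section \<open>Term models of bounded theories\<close>

definition list_subst :: "trm list \<Rightarrow> nat \<Rightarrow> trm" where
  "list_subst xs n = (if n < length xs then xs ! n else Zero)"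

lemma list_subst_simps [simp]:
  "list_subst (a # xs) 0 = a"
  "list_subst (a # xs) (Suc n) = list_subst xs n"
  "list_subst (a # xs) (numeral k) = list_subst xs (pred_numeral k)"
  by (auto simp: list_subst_def numeral_eq_Suc)

lemma list_subst_upd: "(list_subst (c # xs))(0 := a) = list_subst (a # xs)"
  by (auto simp: list_subst_def nth_Cons split: nat.split)

text \<open>A deductively closed set of formulas, read with its free variables as constants.
  It need not be prime, so the strong unit property of its term model is put in by hand.\<close>
locale bounded_theory =
  fixes Th :: "'i fm \<Rightarrow> bool"
  assumes Th_mp: "Th p \<Longrightarrow> Lu_prov p q \<Longrightarrow> Th q"
    and Th_Conj: "Th p \<Longrightarrow> Th q \<Longrightarrow> Th (Conj p q)"
    and Th_Top: "Th Top"
    and Th_bounded: "\<exists>n. Th (Le (Sup t Zero) (nu n))"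
begin

lemma Th_prov: "Lu_prov Top q \<Longrightarrow> Th q"
  using Th_mp Th_Top by blast

lemma Th_ax_Top: "Lu_ax Top q \<Longrightarrow> Th (fm_subst s q)"
  using Th_prov Lu_prov_Top_subst axiom by blast

lemma Th_ax: "Lu_ax p q \<Longrightarrow> Th (fm_subst s p) \<Longrightarrow> Th (fm_subst s q)"
  using Th_mp subst axiom by blast

lemma Th_ax_Conj:
  "Lu_ax (Conj p p') q \<Longrightarrow> Th (fm_subst s p) \<Longrightarrow> Th (fm_subst s p') \<Longrightarrow> Th (fm_subst s q)"
  using Th_ax[of "Conj p p'" q s] Th_Conj by simp

lemma Th_Leibniz:
  "Th (Eq a b) \<Longrightarrow> Th (fm_subst (list_subst (a # xs)) p) \<Longrightarrow> Th (fm_subst (list_subst (b # xs)) p)"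
  using Lu_prov_Leibniz[of a b "list_subst (a # xs)" p] Th_Conj Th_mp
  unfolding list_subst_upd by blast

lemma Th_Eq_refl: "Th (Eq a a)"
  using Th_prov[OF Lu_prov_Top_subst[OF eq_refl, of "list_subst [a]"]] by simp

lemma Th_Eq_sym: "Th (Eq a b) \<Longrightarrow> Th (Eq b a)"
  using Th_Leibniz[of a b "[a]" "Eq (Var 0) (Var 1)"] Th_Eq_refl by simp

lemma Th_Eq_trans: "Th (Eq a b) \<Longrightarrow> Th (Eq b c) \<Longrightarrow> Th (Eq a c)"
  using Th_Leibniz[of b c "[a]" "Eq (Var 1) (Var 0)"] by simp

lemma Th_Eq_Plus: "Th (Eq a a') \<Longrightarrow> Th (Eq b b') \<Longrightarrow> Th (Eq (Plus a b) (Plus a' b'))"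
  using Th_Leibniz[of a a' "[a, b]" "Eq (Plus (Var 1) (Var 2)) (Plus (Var 0) (Var 2))"]
    Th_Leibniz[of b b' "[a, b, a']" "Eq (Plus (Var 1) (Var 2)) (Plus (Var 3) (Var 0))"]
    Th_Eq_refl by simp

lemma Th_Eq_Sup: "Th (Eq a a') \<Longrightarrow> Th (Eq b b') \<Longrightarrow> Th (Eq (Sup a b) (Sup a' b'))"
  using Th_Leibniz[of a a' "[a, b]" "Eq (Sup (Var 1) (Var 2)) (Sup (Var 0) (Var 2))"]
    Th_Leibniz[of b b' "[a, b, a']" "Eq (Sup (Var 1) (Var 2)) (Sup (Var 3) (Var 0))"]
    Th_Eq_refl by simp

lemma Th_Eq_Inf: "Th (Eq a a') \<Longrightarrow> Th (Eq b b') \<Longrightarrow> Th (Eq (Inf a b) (Inf a' b'))"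
  using Th_Leibniz[of a a' "[a, b]" "Eq (Inf (Var 1) (Var 2)) (Inf (Var 0) (Var 2))"]
    Th_Leibniz[of b b' "[a, b, a']" "Eq (Inf (Var 1) (Var 2)) (Inf (Var 3) (Var 0))"]
    Th_Eq_refl by simp

lemma Th_Eq_Neg: "Th (Eq a a') \<Longrightarrow> Th (Eq (Neg a) (Neg a'))"
  using Th_Leibniz[of a a' "[a]" "Eq (Neg (Var 1)) (Neg (Var 0))"] Th_Eq_refl by simp

lemma Th_Le_cong: "Th (Eq a a') \<Longrightarrow> Th (Eq b b') \<Longrightarrow> Th (Le a b) \<Longrightarrow> Th (Le a' b')"
  using Th_Leibniz[of a a' "[b]" "Le (Var 0) (Var 1)"]
    Th_Leibniz[of b b' "[a']" "Le (Var 1) (Var 0)"] by simp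

end

instance trm :: countable
  by countable_datatype

text \<open>The class of a term modulo provable equality in Th is stored in 'a as the code of
  its least member in the enumeration of terms.\<close>
locale term_model = bounded_theory Th for Th :: "'i fm \<Rightarrow> bool" +
  fixes enc :: "nat \<Rightarrow> 'a"
  assumes inj_enc: "inj enc"
begin

definition cls :: "trm \<Rightarrow> 'a" where
  "cls t = enc (LEAST k. Th (Eq (from_nat k) t))"

definition repr :: "'a \<Rightarrow> trm" where
  "repr x = from_nat (inv enc x)"

lemma Th_Eq_Least: "Th (Eq (from_nat (LEAST k. Th (Eq (from_nat k) t))) t)"
  by (rule LeastI[of _ "to_nat t"]) (simp add: Th_Eq_refl)

lemma cls_eq_iff: "cls a = cls b \<longleftrightarrow> Th (Eq a b)"
proof
  assume "cls a = cls b"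
  then have "(LEAST k. Th (Eq (from_nat k) a)) = (LEAST k. Th (Eq (from_nat k) b))"
    using inj_enc by (auto simp: cls_def inj_def)
  then show "Th (Eq a b)"
    using Th_Eq_Least[of a] Th_Eq_Least[of b] Th_Eq_sym Th_Eq_trans by metis
next
  assume "Th (Eq a b)"
  then have "Th (Eq (from_nat k) a) = Th (Eq (from_nat k) b)" for k
    using Th_Eq_sym Th_Eq_trans by metis
  then show "cls a = cls b" by (simp add: cls_def)
qed

lemma Th_Eq_repr_cls: "Th (Eq (repr (cls t)) t)"
  using Th_Eq_Least[of t] inj_enc by (simp add: repr_def cls_def)

definition TM :: "'a lstr" where
  "TM = \<lparr> l_carrier = range cls, l_zero = cls Zero, l_unit = cls U,
     l_add = (\<lambda>x y. cls (Plus (repr x) (repr y))), l_neg = (\<lambda>x. cls (Neg (repr x))),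
     l_sup = (\<lambda>x y. cls (Sup (repr x) (repr y))), l_inf = (\<lambda>x y. cls (Inf (repr x) (repr y))),
     l_le = (\<lambda>x y. Th (Le (repr x) (repr y))) \<rparr>"

lemma TM_simps [simp]:
  "l_carrier TM = range cls" "l_zero TM = cls Zero" "l_unit TM = cls U"
  "l_add TM (cls a) (cls b) = cls (Plus a b)"
  "l_neg TM (cls a) = cls (Neg a)"
  "l_sup TM (cls a) (cls b) = cls (Sup a b)"
  "l_inf TM (cls a) (cls b) = cls (Inf a b)"
  "l_le TM (cls a) (cls b) = Th (Le a b)"
  by (auto simp: TM_def cls_eq_iff intro: Th_Eq_Plus Th_Eq_Neg Th_Eq_Sup Th_Eq_Inf Th_Eq_repr_cls
      Th_Le_cong[OF Th_Eq_repr_cls Th_Eq_repr_cls]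
      Th_Le_cong[OF Th_Eq_sym[OF Th_Eq_repr_cls] Th_Eq_sym[OF Th_Eq_repr_cls]])

lemma eval_TM: "eval TM (\<lambda>n. cls (\<sigma> n)) t = cls (trm_subst \<sigma> t)"
  by (induction t) auto

lemma l_nu_TM: "l_nu TM n = cls (nu n)"
  by (induction n) (auto simp: l_nu_def)

lemma ulgroup_TM: "ulgroup TM"
proof -
  have trans: "Th (Le a b) \<Longrightarrow> Th (Le b c) \<Longrightarrow> Th (Le a c)" for a b c
    using Th_ax_Conj[OF ax_trans, of "list_subst [a, b, c]"] by simp
  have sup_upper1: "Th (Le a (Sup a b))" for a b
    using Th_ax_Top[OF ax_sup1, of "list_subst [a, b]"] by simp
  have strong_unit: "\<exists>n. Th (Le t (nu n))" for t
    using Th_bounded[of t] trans[OF sup_upper1] by blast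
  show ?thesis
  proof unfold_locales
  qed (auto simp: cls_eq_iff l_nu_TM strong_unit
      Th_ax_Top[OF ax_assoc, of "list_subst [_, _, _]", simplified]
      Th_ax_Top[OF ax_comm, of "list_subst [_, _]", simplified]
      Th_ax_Top[OF ax_zero, of "list_subst [_]", simplified]
      Th_ax_Top[OF ax_neg, of "list_subst [_]", simplified]
      Th_ax_Top[OF ax_refl, of "list_subst [_]", simplified]
      Th_ax_Top[OF ax_inf1, of "list_subst [_, _]", simplified]
      Th_ax_Top[OF ax_inf2, of "list_subst [_, _]", simplified]
      Th_ax_Top[OF ax_sup2, of "list_subst [_, _]", simplified]
      Th_ax_Top[OF ax_unit_pos, of "list_subst []", simplified] sup_upper1
      intro: trans rangeI
      Th_ax_Conj[OF ax_antisym, of "list_subst [_, _]", simplified]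
      Th_ax_Conj[OF ax_inf3, of "list_subst [_, _, _]", simplified]
      Th_ax_Conj[OF ax_sup3, of "list_subst [_, _, _]", simplified]
      Th_ax[OF ax_transl, of "list_subst [_, _, _]", simplified])
qed

text \<open>Only this half of the truth lemma holds, as Th need be neither prime nor witnessed;
  it suffices because the formulas required to hold in the term model are atoms.\<close>
lemma sat_TM_imp_Th: "sat TM (\<lambda>n. cls (\<sigma> n)) p \<Longrightarrow> Th (fm_subst \<sigma> p)"
proof (induction p arbitrary: \<sigma>)
  case (Eq a b)
  then show ?case by (simp add: eval_TM cls_eq_iff)
next
  case (Le a b)
  then show ?case by (simp add: eval_TM)
next
  case Top
  then show ?case by (simp add: Th_Top)
next
  case (Conj p q)
  then show ?case by (simp add: Th_Conj)
next
  case (Disj I F)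
  then obtain i where "i \<in> I" "Th (fm_subst \<sigma> (F i))" by auto
  then show ?case using Th_mp[OF _ disj_i[of i I "\<lambda>i. fm_subst \<sigma> (F i)"]] by simp
next
  case (Ex p)
  then obtain t where "sat TM (cons_val (cls t) (\<lambda>n. cls (\<sigma> n))) p" by auto
  moreover have "cons_val (cls t) (\<lambda>n. cls (\<sigma> n)) = (\<lambda>n. cls (case_nat t \<sigma> n))"
    by (auto simp: cons_val_def split: nat.split)
  ultimately have "Th (fm_subst (case_nat t \<sigma>) p)" using Ex.IH by simp
  then have "Th (fm_subst (case_nat t Var) (fm_subst (lift_subst \<sigma>) p))"
    by (simp add: fm_subst_fm_subst comp_subst_case_nat_lift_subst)
  then show ?case using Th_mp[OF _ Lu_prov_Ex_intro] by simp
qed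

end

section \<open>Reduction of a formula to atoms\<close>

primrec conj_list :: "'i fm list \<Rightarrow> 'i fm" where
  "conj_list [] = Top"
| "conj_list (p # ps) = Conj p (conj_list ps)"

definition atomic :: "'i fm \<Rightarrow> bool" where
  "atomic p \<longleftrightarrow> (\<exists>a b. p = Eq a b \<or> p = Le a b)"

lemma shift_fm_conj_list: "shift_fm k (conj_list ps) = conj_list (map (shift_fm k) ps)"
  by (induction ps) auto

lemma atomic_shift_fm: "atomic p \<Longrightarrow> atomic (shift_fm k p)"
  by (auto simp: atomic_def shift_fm_def)

lemma Lu_prov_shift_fm: "Lu_prov p q \<Longrightarrow> Lu_prov (shift_fm k p) (shift_fm k q)"
  unfolding shift_fm_def by (rule subst)

lemma Lu_prov_conj_list_member: "p \<in> set ps \<Longrightarrow> Lu_prov (conj_list ps) p"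
  by (induction ps) (auto intro: conj_e1 cut[OF conj_e2])

lemma (in term_model) sat_TM_conj_list:
  "list_all atomic ps \<Longrightarrow> \<forall>p\<in>set ps. Th p \<Longrightarrow> sat TM (\<lambda>n. cls (Var n)) (conj_list ps)"
proof (induction ps)
  case (Cons p ps)
  then have "sat TM (\<lambda>n. cls (Var n)) p"
    using eval_TM[of Var] by (auto simp: atomic_def cls_eq_iff)
  then show ?case using Cons by simp
qed simp

lemma Conj_pull_left: "Lu_prov (Conj a (Conj b c)) (Conj (Conj b a) c)"
  by (rule conj_i[OF conj_i[OF cut[OF conj_e2 conj_e1] conj_e1] cut[OF conj_e2 conj_e2]])

lemma Conj_drop_Top: "Lu_prov (Conj a (Conj Top c)) (Conj a c)"
  by (rule conj_i[OF conj_e1 cut[OF conj_e2 conj_e2]])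

lemma Conj_flatten: "Lu_prov (Conj a (Conj (Conj b c) r)) (Conj a (Conj b (Conj c r)))"
  by (rule conj_i[OF conj_e1 conj_i[OF cut[OF conj_e2 cut[OF conj_e1 conj_e1]]
       conj_i[OF cut[OF conj_e2 cut[OF conj_e1 conj_e2]] cut[OF conj_e2 conj_e2]]]])

lemma Conj_swap_right: "Lu_prov (Conj (Conj a r) g) (Conj a (Conj g r))"
  by (rule conj_i[OF cut[OF conj_e1 conj_e1] conj_i[OF conj_e2 cut[OF conj_e1 conj_e2]]])

lemma Conj_swap_right': "Lu_prov (Conj a (Conj g r)) (Conj (Conj a r) g)"
  by (rule conj_i[OF conj_i[OF conj_e1 cut[OF conj_e2 conj_e2]] cut[OF conj_e2 conj_e1]])

lemma not_Lu_prov_antimono: "Lu_prov p p' \<Longrightarrow> \<not> Lu_prov p q \<Longrightarrow> \<not> Lu_prov p' q"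
  using cut by blast

lemma Lu_prov_Conj_Disj:
  assumes "\<And>i. i \<in> I \<Longrightarrow> Lu_prov (Conj a (Conj (G i) r)) q"
  shows "Lu_prov (Conj a (Conj (Disj I G) r)) q"
proof -
  have "Lu_prov (Disj I (\<lambda>i. Conj (Conj a r) (G i))) q"
    by (rule disj_e) (rule cut[OF Conj_swap_right assms])
  then show ?thesis using cut[OF Conj_swap_right' cut[OF distrib]] by blast
qed

lemma Lu_prov_Conj_Ex:
  assumes "Lu_prov (Conj (shift_fm 1 a) (Conj p (shift_fm 1 r))) (shift_fm 1 q)"
  shows "Lu_prov (Conj a (Conj (Ex p) r)) q"
proof -
  have "Lu_prov (Conj (lift_fm (Conj a r)) p) (lift_fm q)"
    using cut[OF Conj_swap_right assms] by (simp add: lift_fm_eq_shift_fm)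
  then have "Lu_prov (Ex (Conj (lift_fm (Conj a r)) p)) q" by (rule ex_e)
  then have "Lu_prov (Conj (Conj a r) (Ex p)) q" using cut[OF frobenius] by blast
  then show ?thesis using cut[OF Conj_swap_right'] by blast
qed

text \<open>The atoms ps' live over k new variables 0, ..., k-1 (witnesses for the existentials
  met so far); the old variables are shifted up by k.\<close>
definition atomic_refinement :: "'i fm list \<Rightarrow> 'i fm \<Rightarrow> 'i fm \<Rightarrow> 'i fm \<Rightarrow> bool" where
  "atomic_refinement ps p r q \<longleftrightarrow> (\<exists>ps' k. list_all atomic ps' \<and>
     \<not> Lu_prov (Conj (conj_list ps') (shift_fm k r)) (shift_fm k q) \<and>
     Lu_prov (conj_list ps') (shift_fm k p) \<and> Lu_prov (conj_list ps') (shift_fm k (conj_list ps)))"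

lemma atomic_refinement_atomic:
  assumes "atomic p" "list_all atomic ps" "\<not> Lu_prov (Conj (conj_list ps) (Conj p r)) q"
  shows "atomic_refinement ps p r q"
  unfolding atomic_refinement_def
proof (intro exI conjI)
  show "list_all atomic (p # ps)" using assms(1,2) by simp
  show "\<not> Lu_prov (Conj (conj_list (p # ps)) (shift_fm 0 r)) (shift_fm 0 q)"
    using not_Lu_prov_antimono[OF Conj_pull_left assms(3)] by simp
qed (auto intro: conj_e1 conj_e2)

lemma atomic_refinement_mono:
  "atomic_refinement ps p r q \<Longrightarrow> Lu_prov p p' \<Longrightarrow> atomic_refinement ps p' r q"
  unfolding atomic_refinement_def by (meson Lu_prov_shift_fm cut)

lemma atomic_refinement_Conj:
  assumes refine1: "atomic_refinement ps p1 (Conj p2 r) q"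
    and refine2: "\<And>ps' k. list_all atomic ps' \<Longrightarrow>
      \<not> Lu_prov (Conj (conj_list ps') (Conj (shift_fm k p2) (shift_fm k r))) (shift_fm k q) \<Longrightarrow>
      atomic_refinement ps' (shift_fm k p2) (shift_fm k r) (shift_fm k q)"
  shows "atomic_refinement ps (Conj p1 p2) r q"
proof -
  obtain ps1 k1 where ps1: "list_all atomic ps1"
      "\<not> Lu_prov (Conj (conj_list ps1) (Conj (shift_fm k1 p2) (shift_fm k1 r))) (shift_fm k1 q)"
      "Lu_prov (conj_list ps1) (shift_fm k1 p1)" "Lu_prov (conj_list ps1) (shift_fm k1 (conj_list ps))"
    using refine1 unfolding atomic_refinement_def by auto
  obtain ps2 k2 where ps2: "list_all atomic ps2"
      "\<not> Lu_prov (Conj (conj_list ps2) (shift_fm k2 (shift_fm k1 r))) (shift_fm k2 (shift_fm k1 q))"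
      "Lu_prov (conj_list ps2) (shift_fm k2 (shift_fm k1 p2))"
      "Lu_prov (conj_list ps2) (shift_fm k2 (conj_list ps1))"
    using refine2[OF ps1(1,2)] unfolding atomic_refinement_def by blast
  have "Lu_prov (conj_list ps2) (shift_fm k2 (shift_fm k1 p1))"
    using ps2(4) Lu_prov_shift_fm[OF ps1(3)] cut by blast
  moreover have "Lu_prov (conj_list ps2) (shift_fm k2 (shift_fm k1 (conj_list ps)))"
    using ps2(4) Lu_prov_shift_fm[OF ps1(4)] cut by blast
  ultimately show ?thesis using ps2(1-3) unfolding atomic_refinement_def
    by (intro exI[of _ ps2] exI[of _ "k1 + k2"]) (auto simp: shift_fm_shift_fm intro: conj_i)
qed

lemma atomic_refinement_Ex:
  assumes "atomic_refinement (map (shift_fm 1) ps) p (shift_fm 1 r) (shift_fm 1 q)"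
  shows "atomic_refinement ps (Ex p) r q"
proof -
  obtain ps' k where ps': "list_all atomic ps'"
      "\<not> Lu_prov (Conj (conj_list ps') (shift_fm k (shift_fm 1 r))) (shift_fm k (shift_fm 1 q))"
      "Lu_prov (conj_list ps') (shift_fm k p)"
      "Lu_prov (conj_list ps') (shift_fm k (shift_fm 1 (conj_list ps)))"
    using assms unfolding atomic_refinement_def shift_fm_conj_list by blast
  have "Lu_prov p (shift_fm 1 (Ex p))"
    using ex_i[OF ident] by (simp add: lift_fm_eq_shift_fm)
  then have "Lu_prov (conj_list ps') (shift_fm k (shift_fm 1 (Ex p)))"
    using ps'(3) Lu_prov_shift_fm cut by blast
  then show ?thesis using ps' unfolding atomic_refinement_def
    by (intro exI[of _ ps'] exI[of _ "1 + k"]) (auto simp: shift_fm_shift_fm)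
qed

lemma atomic_refinement_exists:
  "list_all atomic ps \<Longrightarrow> \<not> Lu_prov (Conj (conj_list ps) (Conj (fm_subst \<sigma> p) r)) q \<Longrightarrow>
   atomic_refinement ps (fm_subst \<sigma> p) r q"
proof (induction p arbitrary: \<sigma> ps r q)
  case (Eq a b)
  have "atomic (fm_subst \<sigma> (Eq a b))" by (simp add: atomic_def)
  then show ?case using Eq.prems by (rule atomic_refinement_atomic)
next
  case (Le a b)
  have "atomic (fm_subst \<sigma> (Le a b))" by (simp add: atomic_def)
  then show ?case using Le.prems by (rule atomic_refinement_atomic)
next
  case Top
  then have "\<not> Lu_prov (Conj (conj_list ps) r) q"
    using not_Lu_prov_antimono[OF Conj_drop_Top] by simp
  then show ?case using Top.prems(1) unfolding atomic_refinement_def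
    by (intro exI[of _ ps] exI[of _ 0]) (auto intro: top_intro ident)
next
  case (Conj p1 p2)
  have "\<not> Lu_prov (Conj (conj_list ps) (Conj (fm_subst \<sigma> p1) (Conj (fm_subst \<sigma> p2) r))) q"
    using not_Lu_prov_antimono[OF Conj_flatten] Conj.prems(2) by simp
  then have refine1: "atomic_refinement ps (fm_subst \<sigma> p1) (Conj (fm_subst \<sigma> p2) r) q"
    by (rule Conj.IH(1)[OF Conj.prems(1)])
  have refine2: "atomic_refinement ps' (shift_fm k (fm_subst \<sigma> p2)) (shift_fm k r) (shift_fm k q)"
    if "list_all atomic ps'"
      "\<not> Lu_prov (Conj (conj_list ps') (Conj (shift_fm k (fm_subst \<sigma> p2)) (shift_fm k r))) (shift_fm k q)"
    for ps' k
    using Conj.IH(2)[where \<sigma> = "comp_subst (\<lambda>n. Var (n + k)) \<sigma>"] that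
    by (simp add: shift_fm_fm_subst)
  show ?case
    using atomic_refinement_Conj[OF refine1 refine2] by simp
next
  case (Disj I F)
  obtain i where i: "i \<in> I" "\<not> Lu_prov (Conj (conj_list ps) (Conj (fm_subst \<sigma> (F i)) r)) q"
    using Disj.prems(2) Lu_prov_Conj_Disj[of I _ "\<lambda>i. fm_subst \<sigma> (F i)" r q] by auto
  have "Lu_prov (fm_subst \<sigma> (F i)) (fm_subst \<sigma> (Disj I F))"
    using disj_i[OF i(1), of "\<lambda>i. fm_subst \<sigma> (F i)"] by simp
  with Disj.IH[OF rangeI Disj.prems(1) i(2)] show ?case
    by (rule atomic_refinement_mono)
next
  case (Ex p)
  have "\<not> Lu_prov (Conj (conj_list (map (shift_fm 1) ps))
      (Conj (fm_subst (lift_subst \<sigma>) p) (shift_fm 1 r))) (shift_fm 1 q)"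
    using Ex.prems(2) Lu_prov_Conj_Ex[of "conj_list ps" _ r q] by (auto simp: shift_fm_conj_list)
  moreover have "list_all atomic (map (shift_fm 1) ps)"
    using Ex.prems(1) by (auto simp: list_all_iff intro: atomic_shift_fm)
  ultimately show ?case using Ex.IH by (simp add: atomic_refinement_Ex)
qed

lemma unprovable_atomic_refinement:
  assumes "\<not> Lu_prov p q"
  obtains ps k where "list_all atomic ps" "Lu_prov (conj_list ps) (shift_fm k p)"
    "\<not> Lu_prov (conj_list ps) (shift_fm k q)"
proof -
  have "\<not> Lu_prov (Conj (conj_list []) (Conj (fm_subst Var p) Top)) q"
    using assms cut[OF conj_i[OF top_intro conj_i[OF ident top_intro]]] by auto
  then have "atomic_refinement [] p Top q"
    using atomic_refinement_exists[of "[]" Var p Top q] by simp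
  then obtain ps k where ps: "list_all atomic ps" "Lu_prov (conj_list ps) (shift_fm k p)"
      "\<not> Lu_prov (Conj (conj_list ps) (shift_fm k Top)) (shift_fm k q)"
    unfolding atomic_refinement_def by blast
  have "\<not> Lu_prov (Conj (conj_list ps) Top) (shift_fm k q)"
    using ps(3) by simp
  then have "\<not> Lu_prov (conj_list ps) (shift_fm k q)"
    by (rule not_Lu_prov_antimono[OF conj_e1])
  with ps(1,2) show thesis by (rule that)
qed

section \<open>Completeness\<close>

definition bound_fm :: "trm \<Rightarrow> nat \<Rightarrow> 'i fm" where
  "bound_fm t n = Le (Sup t Zero) (nu n)"

text \<open>Instantiating the strong unit axiom at the positive term Sup t Zero needs a countably
  infinite index set; this is where the infinitude of 'i is used.\<close>
lemma unprovable_Conj_bound_fm: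
  assumes "infinite (UNIV :: 'i set)" and "\<not> Lu_prov c q"
  shows "\<exists>n. \<not> Lu_prov (Conj c (bound_fm t n :: 'i fm)) q"
proof (rule ccontr)
  assume "\<not> ?thesis"
  then have bounded: "Lu_prov (Conj c (bound_fm t n)) q" for n by blast
  obtain g :: "nat \<Rightarrow> 'i" where g: "inj g"
    using assms(1) infinite_countable_subset by blast
  define F :: "'i \<Rightarrow> 'i fm" where "F i = Le vx (nu (inv g i))" for i
  have "F ` range g = range (\<lambda>n. Le vx (nu n))"
    using g by (auto simp: F_def image_iff)
  then have "Lu_prov (Le Zero vx) (Disj (range g) F)"
    by (intro axiom ax_strong_unit)
  from subst[OF this, of "list_subst [Sup t Zero]"]
  have "Lu_prov (Le Zero (Sup t Zero)) (Disj (range g) (\<lambda>i. bound_fm t (inv g i)))"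
    by (simp add: F_def bound_fm_def)
  moreover have "Lu_prov Top (Le Zero (Sup t Zero))"
    using Lu_prov_Top_subst[OF axiom[OF ax_sup2], of "list_subst [t, Zero]"] by simp
  ultimately have "Lu_prov c (Disj (range g) (\<lambda>i. bound_fm t (inv g i)))"
    using cut[OF cut[OF top_intro]] by blast
  then have "Lu_prov c (Conj c (Disj (range g) (\<lambda>i. bound_fm t (inv g i))))"
    by (rule conj_i[OF ident])
  moreover have "Lu_prov (Disj (range g) (\<lambda>i. Conj c (bound_fm t (inv g i)))) q"
    by (rule disj_e) (auto intro: bounded)
  ultimately have "Lu_prov c q" using cut[OF _ cut[OF distrib]] by blast
  with assms(2) show False by blast
qed

primrec bound_chain :: "'i fm \<Rightarrow> 'i fm \<Rightarrow> nat \<Rightarrow> 'i fm" where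
  "bound_chain c q 0 = c"
| "bound_chain c q (Suc k) = Conj (bound_chain c q k)
     (bound_fm (from_nat k) (SOME n. \<not> Lu_prov (Conj (bound_chain c q k) (bound_fm (from_nat k) n)) q))"

lemma bound_chain_unprovable:
  assumes "infinite (UNIV :: 'i set)" and "\<not> Lu_prov c (q :: 'i fm)"
  shows "\<not> Lu_prov (bound_chain c q k) q"
proof (induction k)
  case 0
  then show ?case using assms(2) by simp
next
  case (Suc k)
  then show ?case
    using someI_ex[OF unprovable_Conj_bound_fm[OF assms(1) Suc, of "from_nat k"]] by simp
qed

lemma bound_chain_mono: "j \<le> k \<Longrightarrow> Lu_prov (bound_chain c q k) (bound_chain c q j)"
proof (induction k)
  case 0
  then show ?case by (simp add: ident)
next
  case (Suc k)
  then show ?case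
    by (cases "j = Suc k") (auto simp: ident intro: cut[OF conj_e1])
qed

lemma bounded_theory_bound_chain: "bounded_theory (\<lambda>p. \<exists>j. Lu_prov (bound_chain c q j) p)"
proof
  show "\<exists>j. Lu_prov (bound_chain c q j) p'" if "\<exists>j. Lu_prov (bound_chain c q j) p" "Lu_prov p p'"
    for p p'
    using that cut by blast
  show "\<exists>j. Lu_prov (bound_chain c q j) (Conj p p')"
    if prems: "\<exists>j. Lu_prov (bound_chain c q j) p" "\<exists>j. Lu_prov (bound_chain c q j) p'" for p p'
  proof -
    obtain j1 j2 where "Lu_prov (bound_chain c q j1) p" "Lu_prov (bound_chain c q j2) p'"
      using prems by blast
    then have "Lu_prov (bound_chain c q (max j1 j2)) p" "Lu_prov (bound_chain c q (max j1 j2)) p'"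
      using cut[OF bound_chain_mono] by (meson max.cobounded1 max.cobounded2)+
    then show ?thesis using conj_i by blast
  qed
  show "\<exists>j. Lu_prov (bound_chain c q j) Top"
    using top_intro by blast
  show "\<exists>n j. Lu_prov (bound_chain c q j) (Le (Sup t Zero) (nu n))" for t
  proof -
    have "\<exists>n. Lu_prov (bound_chain c q (Suc (to_nat t))) (bound_fm t n)"
      using conj_e2 by (simp only: bound_chain.simps from_nat_to_nat) blast
    then show ?thesis unfolding bound_fm_def by blast
  qed
qed

lemma countermodel:
  assumes "infinite (UNIV :: 'i set)" and "infinite (UNIV :: 'a set)"
    and "list_all atomic ps" and "\<not> Lu_prov (conj_list ps) (q :: 'i fm)"
  obtains M :: "'a lstr" and v where "ulgroup M" "\<forall>n. v n \<in> l_carrier M"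
    "sat M v (conj_list ps)" "\<not> sat M v q"
proof -
  obtain enc :: "nat \<Rightarrow> 'a" where enc: "inj enc"
    using assms(2) infinite_countable_subset by blast
  define Th where "Th p \<longleftrightarrow> (\<exists>j. Lu_prov (bound_chain (conj_list ps) q j) p)" for p
  interpret term_model Th enc
    unfolding Th_def term_model_def term_model_axioms_def using bounded_theory_bound_chain enc by blast
  have "\<forall>p\<in>set ps. Th p"
    using Lu_prov_conj_list_member unfolding Th_def by (metis bound_chain.simps(1))
  then have "sat TM (\<lambda>n. cls (Var n)) (conj_list ps)"
    using sat_TM_conj_list assms(3) by blast
  moreover have "\<not> sat TM (\<lambda>n. cls (Var n)) q"
    using sat_TM_imp_Th[of Var q] bound_chain_unprovable[OF assms(1,4)] unfolding Th_def by auto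
  moreover have "\<forall>n. cls (Var n) \<in> l_carrier TM" by simp
  ultimately show thesis by (intro that[OF ulgroup_TM])
qed

theorem Lu_prov_if_valid:
  assumes "infinite (UNIV :: 'i set)" and "infinite (UNIV :: 'a set)"
    and valid: "\<forall>M :: 'a lstr. unital_lgroup M \<longrightarrow> valid_in M p q"
  shows "Lu_prov (p :: 'i fm) q"
proof (rule ccontr)
  assume "\<not> Lu_prov p q"
  then obtain ps k where ps: "list_all atomic ps" "Lu_prov (conj_list ps) (shift_fm k p)"
      "\<not> Lu_prov (conj_list ps) (shift_fm k q)"
    by (rule unprovable_atomic_refinement)
  obtain M :: "'a lstr" and v where M: "ulgroup M" "\<forall>n. v n \<in> l_carrier M"
      "sat M v (conj_list ps)" "\<not> sat M v (shift_fm k q)"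
    using countermodel[OF assms(1,2) ps(1,3)] .
  have "sat M v (shift_fm k p)"
    using ulgroup.Lu_prov_sound[OF M(1) ps(2) M(2,3)] .
  moreover have "valid_in M p q"
    using valid ulgroup.unital_lgroup[OF M(1)] by blast
  ultimately show False
    using M(2,4) unfolding valid_in_def shift_fm_def sat_fm_subst by auto
qed

section \<open>The integers are initial\<close>

context ulgroup
begin

abbreviation ladd (infixl "\<oplus>" 65) where "x \<oplus> y \<equiv> l_add M x y"
abbreviation lle (infix "\<preceq>" 50) where "x \<preceq> y \<equiv> l_le M x y"

lemma l_nu_closed: "l_nu M n \<in> l_carrier M"
  by (induction n) (auto simp: l_nu_def zero_closed unit_closed add_closed)

lemma l_zero_add: "x \<in> l_carrier M \<Longrightarrow> l_zero M \<oplus> x = x"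
  using l_add_commute l_add_zero zero_closed by metis

lemma l_neg_unique:
  assumes "x \<in> l_carrier M" "y \<in> l_carrier M" "x \<oplus> y = l_zero M"
  shows "y = l_neg M x"
proof -
  have "y = y \<oplus> (x \<oplus> l_neg M x)" using assms by (simp add: l_add_neg l_add_zero)
  also have "\<dots> = (y \<oplus> x) \<oplus> l_neg M x" using assms neg_closed l_add_assoc by simp
  also have "\<dots> = l_neg M x" using assms l_add_commute l_zero_add neg_closed by simp
  finally show ?thesis .
qed

lemma l_add_add_swap:
  assumes "x \<in> l_carrier M" "y \<in> l_carrier M" "z \<in> l_carrier M" "w \<in> l_carrier M"
  shows "(x \<oplus> y) \<oplus> (z \<oplus> w) = (x \<oplus> z) \<oplus> (y \<oplus> w)"
  using assms by (metis l_add_assoc l_add_commute add_closed)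

lemma l_neg_add:
  assumes "x \<in> l_carrier M" "y \<in> l_carrier M"
  shows "l_neg M (x \<oplus> y) = l_neg M x \<oplus> l_neg M y"
proof -
  have "(x \<oplus> y) \<oplus> (l_neg M x \<oplus> l_neg M y) = (x \<oplus> l_neg M x) \<oplus> (y \<oplus> l_neg M y)"
    using assms by (simp add: l_add_add_swap neg_closed)
  also have "\<dots> = l_zero M" using assms by (simp add: l_add_neg l_add_zero zero_closed)
  finally show ?thesis
    using l_neg_unique assms add_closed neg_closed by metis
qed

lemma l_neg_neg: "x \<in> l_carrier M \<Longrightarrow> l_neg M (l_neg M x) = x"
  using l_neg_unique l_add_commute l_add_neg neg_closed by metis

lemma l_sup_absorb1: "x \<in> l_carrier M \<Longrightarrow> y \<in> l_carrier M \<Longrightarrow> y \<preceq> x \<Longrightarrow> l_sup M x y = x"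
  by (meson l_le_antisym l_le_refl l_sup_least l_sup_upper1 sup_closed)

lemma l_sup_absorb2: "x \<in> l_carrier M \<Longrightarrow> y \<in> l_carrier M \<Longrightarrow> x \<preceq> y \<Longrightarrow> l_sup M x y = y"
  by (meson l_le_antisym l_le_refl l_sup_least l_sup_upper2 sup_closed)

lemma l_inf_absorb1: "x \<in> l_carrier M \<Longrightarrow> y \<in> l_carrier M \<Longrightarrow> x \<preceq> y \<Longrightarrow> l_inf M x y = x"
  by (meson l_le_antisym l_le_refl l_inf_greatest l_inf_lower1 inf_closed)

lemma l_inf_absorb2: "x \<in> l_carrier M \<Longrightarrow> y \<in> l_carrier M \<Longrightarrow> y \<preceq> x \<Longrightarrow> l_inf M x y = y"
  by (meson l_le_antisym l_le_refl l_inf_greatest l_inf_lower2 inf_closed)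


lemma l_nu_0: "l_nu M 0 = l_zero M"
  by (simp add: l_nu_def)

lemma l_nu_Suc: "l_nu M (Suc n) = l_nu M n \<oplus> l_unit M"
  by (simp add: l_nu_def)

lemma l_nu_add: "l_nu M (m + n) = l_nu M m \<oplus> l_nu M n"
  by (induction n) (simp_all add: l_nu_0 l_nu_Suc l_add_zero l_add_assoc l_nu_closed unit_closed)

lemma l_nu_nonneg: "l_zero M \<preceq> l_nu M n"
proof (induction n)
  case 0
  then show ?case by (simp add: l_nu_def l_le_refl zero_closed)
next
  case (Suc n)
  have "l_nu M n \<oplus> l_zero M \<preceq> l_nu M n \<oplus> l_unit M"
    by (rule l_add_left_mono[OF zero_closed unit_closed l_nu_closed zero_le_unit])
  then have "l_nu M n \<preceq> l_nu M (Suc n)"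
    by (simp add: l_nu_Suc l_add_zero l_nu_closed)
  then show ?case
    using Suc l_le_trans zero_closed l_nu_closed by blast
qed

text \<open>The image of an integer under the unique homomorphism of unital l-groups from the
  integers with unit 1.\<close>
definition int_hom :: "int \<Rightarrow> 'a" where
  "int_hom i = (if 0 \<le> i then l_nu M (nat i) else l_neg M (l_nu M (nat (- i))))"

lemma int_hom_closed: "int_hom i \<in> l_carrier M"
  by (simp add: int_hom_def l_nu_closed neg_closed)

lemma int_hom_diff: "int_hom (int m - int n) = l_nu M m \<oplus> l_neg M (l_nu M n)"
proof (cases "n \<le> m")
  case True
  define d where "d = m - n"
  have m: "m = d + n" using True by (simp add: d_def)
  have "l_nu M m \<oplus> l_neg M (l_nu M n) = l_nu M d \<oplus> (l_nu M n \<oplus> l_neg M (l_nu M n))"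
    unfolding m l_nu_add by (rule l_add_assoc[OF l_nu_closed l_nu_closed neg_closed[OF l_nu_closed]])
  then show ?thesis by (simp add: m int_hom_def l_add_neg l_add_zero l_nu_closed)
next
  case False
  define d where "d = n - Suc m"
  have n: "n = m + Suc d" using False by (simp add: d_def)
  have "l_nu M m \<oplus> l_neg M (l_nu M n) = l_nu M m \<oplus> (l_neg M (l_nu M m) \<oplus> l_neg M (l_nu M (Suc d)))"
    unfolding n l_nu_add by (simp add: l_neg_add l_nu_closed)
  also have "\<dots> = (l_nu M m \<oplus> l_neg M (l_nu M m)) \<oplus> l_neg M (l_nu M (Suc d))"
    by (rule l_add_assoc[symmetric, OF l_nu_closed neg_closed[OF l_nu_closed] neg_closed[OF l_nu_closed]])
  finally show ?thesis
    by (simp add: n int_hom_def l_add_neg l_zero_add l_nu_closed neg_closed nat_add_distrib)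
qed

lemma int_eq_diff_nat: "\<exists>m n. i = int m - int n"
  by (rule exI[of _ "nat i"], rule exI[of _ "nat (- i)"]) simp

lemma int_hom_add: "int_hom (i + j) = int_hom i \<oplus> int_hom j"
proof -
  obtain m1 n1 m2 n2 where i: "i = int m1 - int n1" and j: "j = int m2 - int n2"
    using int_eq_diff_nat by metis
  have ij: "i + j = int (m1 + m2) - int (n1 + n2)" using i j by simp
  have "int_hom (i + j) = (l_nu M m1 \<oplus> l_nu M m2) \<oplus> (l_neg M (l_nu M n1) \<oplus> l_neg M (l_nu M n2))"
    unfolding ij int_hom_diff l_nu_add by (simp add: l_neg_add l_nu_closed)
  then show ?thesis
    by (simp add: i j int_hom_diff l_add_add_swap l_nu_closed neg_closed)
qed

lemma int_hom_uminus: "int_hom (- i) = l_neg M (int_hom i)"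
proof -
  obtain m n where i: "i = int m - int n" using int_eq_diff_nat by metis
  then have "int_hom (- i) = l_nu M n \<oplus> l_neg M (l_nu M m)"
    using int_hom_diff[of n m] by simp
  then show ?thesis
    by (simp add: i int_hom_diff l_neg_add l_neg_neg l_add_commute l_nu_closed neg_closed)
qed

lemma int_hom_mono: "i \<le> j \<Longrightarrow> int_hom i \<preceq> int_hom j"
proof -
  assume "i \<le> j"
  then obtain d where j: "j = i + int d" by (metis zle_iff_zadd)
  have "int_hom i \<oplus> l_zero M \<preceq> int_hom i \<oplus> l_nu M d"
    by (rule l_add_left_mono[OF zero_closed l_nu_closed int_hom_closed l_nu_nonneg])
  then show ?thesis
    by (simp add: j int_hom_add l_add_zero int_hom_closed) (simp add: int_hom_def)
qed

lemma int_hom_max: "int_hom (max i j) = l_sup M (int_hom i) (int_hom j)"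
  by (cases "i \<le> j") (simp_all add: max_def int_hom_closed int_hom_mono l_sup_absorb1 l_sup_absorb2)

lemma int_hom_min: "int_hom (min i j) = l_inf M (int_hom i) (int_hom j)"
  by (cases "i \<le> j") (simp_all add: min_def int_hom_closed int_hom_mono l_inf_absorb1 l_inf_absorb2)

end

text \<open>The integers with unit 1, transported along an injection e into 'a.\<close>
definition int_lgroup :: "(int \<Rightarrow> 'a) \<Rightarrow> 'a lstr" where
  "int_lgroup e = \<lparr> l_carrier = range e, l_zero = e 0, l_unit = e 1,
     l_add = (\<lambda>x y. e (inv e x + inv e y)), l_neg = (\<lambda>x. e (- inv e x)),
     l_sup = (\<lambda>x y. e (max (inv e x) (inv e y))), l_inf = (\<lambda>x y. e (min (inv e x) (inv e y))),
     l_le = (\<lambda>x y. inv e x \<le> inv e y) \<rparr>"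

lemma int_lgroup_simps [simp]:
  assumes inj_e: "inj e"
  shows
  "l_carrier (int_lgroup e) = range e" "l_zero (int_lgroup e) = e 0" "l_unit (int_lgroup e) = e 1"
  "l_add (int_lgroup e) (e a) (e b) = e (a + b)"
  "l_neg (int_lgroup e) (e a) = e (- a)"
  "l_sup (int_lgroup e) (e a) (e b) = e (max a b)"
  "l_inf (int_lgroup e) (e a) (e b) = e (min a b)"
  "l_le (int_lgroup e) (e a) (e b) = (a \<le> b)"
  using inj_e by (auto simp: int_lgroup_def)

lemma l_nu_int_lgroup: "inj e \<Longrightarrow> l_nu (int_lgroup e) n = e (int n)"
  by (induction n) (simp_all add: l_nu_def add.commute)

lemma ulgroup_int_lgroup:
  assumes inj_e: "inj e"
  shows "ulgroup (int_lgroup e)"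
proof unfold_locales
  show "\<exists>n. l_le (int_lgroup e) x (l_nu (int_lgroup e) n)" if "x \<in> l_carrier (int_lgroup e)" for x
  proof -
    have "\<exists>n. k \<le> int n" for k :: int
      by (rule exI[of _ "nat k"]) simp
    then show ?thesis using that inj_e by (auto simp: l_nu_int_lgroup)
  qed
qed (use inj_e in \<open>auto simp: inj_eq[OF inj_e] add.assoc add.commute\<close>)

lemma eval_int_lgroup_in_range:
  "inj e \<Longrightarrow> \<forall>n. w n \<in> range e \<Longrightarrow> eval (int_lgroup e) w t \<in> range e"
  using ulgroup.eval_closed[OF ulgroup_int_lgroup, of e w t] by simp

lemma (in ulgroup) eval_int_hom:
  assumes inj_e: "inj e" and "\<forall>n. w n \<in> range e"
  shows "eval M (\<lambda>n. int_hom (inv e (w n))) t = int_hom (inv e (eval (int_lgroup e) w t))"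
proof (induction t)
  case (Plus a b)
  then show ?case
    using eval_int_lgroup_in_range[OF assms(1,2), of a] eval_int_lgroup_in_range[OF assms(1,2), of b]
    by (auto simp: int_hom_add inv_f_f[OF inj_e] inj_e)
next
  case (Neg a)
  then show ?case
    using eval_int_lgroup_in_range[OF assms(1,2), of a] by (auto simp: int_hom_uminus inv_f_f[OF inj_e] inj_e)
next
  case (Sup a b)
  then show ?case
    using eval_int_lgroup_in_range[OF assms(1,2), of a] eval_int_lgroup_in_range[OF assms(1,2), of b]
    by (auto simp: int_hom_max inv_f_f[OF inj_e] inj_e)
next
  case (Inf a b)
  then show ?case
    using eval_int_lgroup_in_range[OF assms(1,2), of a] eval_int_lgroup_in_range[OF assms(1,2), of b]
    by (auto simp: int_hom_min inv_f_f[OF inj_e] inj_e)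
qed (simp_all add: inv_f_f[OF inj_e] inj_e int_hom_def l_nu_def l_zero_add unit_closed)

lemma (in ulgroup) sat_int_hom:
  assumes inj_e: "inj e"
  shows "\<forall>n. w n \<in> range e \<Longrightarrow> sat (int_lgroup e) w p \<Longrightarrow> sat M (\<lambda>n. int_hom (inv e (w n))) p"
proof (induction p arbitrary: w)
  case (Eq a b)
  then show ?case using eval_int_hom[OF inj_e] by simp
next
  case (Le a b)
  then show ?case
    using eval_int_lgroup_in_range[OF inj_e, of w a] eval_int_lgroup_in_range[OF inj_e, of w b]
    by (auto simp: eval_int_hom[OF inj_e] inv_f_f[OF inj_e] inj_e int_hom_mono)
next
  case (Ex p)
  then obtain a where a: "a \<in> range e" "sat (int_lgroup e) (cons_val a w) p"
    using inj_e by auto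
  have "(\<lambda>n. int_hom (inv e (cons_val a w n))) = cons_val (int_hom (inv e a)) (\<lambda>n. int_hom (inv e (w n)))"
    by (auto simp: cons_val_def split: nat.split)
  then show ?case
    using Ex.IH[OF cons_val_in_carrier[OF a(1) Ex.prems(1)] a(2)] int_hom_closed by auto
next
  case (Disj I F)
  then obtain i where "i \<in> I" "sat (int_lgroup e) w (F i)" by auto
  then show ?case using Disj.IH[of "F i" w] Disj.prems by auto
qed auto

lemma valid_Disj_sentences_imp_valid:
  assumes "infinite (UNIV :: 'a set)" and "\<forall>i\<in>I. sentence (p i)"
    and "\<forall>M :: 'a lstr. unital_lgroup M \<longrightarrow> valid_in M Top (Disj I p)"
  obtains i where "i \<in> I" "\<forall>M :: 'a lstr. unital_lgroup M \<longrightarrow> valid_in M Top (p i)"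
proof -
  obtain enc :: "nat \<Rightarrow> 'a" where "inj enc"
    using assms(1) infinite_countable_subset by blast
  define e :: "int \<Rightarrow> 'a" where "e = enc \<circ> to_nat"
  have inj_e: "inj e" unfolding e_def using \<open>inj enc\<close> by (simp add: inj_compose)
  have "valid_in (int_lgroup e) Top (Disj I p)"
    using assms(3) ulgroup.unital_lgroup[OF ulgroup_int_lgroup[OF inj_e]] by blast
  then obtain i where i: "i \<in> I" "sat (int_lgroup e) (\<lambda>_. e 0) (p i)"
    unfolding valid_in_def using inj_e by (auto dest!: spec[of _ "\<lambda>_. e 0"])
  have "valid_in M Top (p i)" if "unital_lgroup M" for M :: "'a lstr"
  proof -
    interpret ulgroup M using that by (rule ulgroupI)
    have "sat M (\<lambda>_. int_hom 0) (p i)"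
      using sat_int_hom[OF inj_e, of "\<lambda>_. e 0" "p i"] i(2) inj_e by (simp add: inv_f_f)
    then show ?thesis
      unfolding valid_in_def using sentence_sat_iff assms(2) i(1) by blast
  qed
  with i(1) that show thesis by blast
qed

lemma valid_Disj_sentences_finite_iff:
  assumes "infinite (UNIV :: 'a set)" and "\<forall>i\<in>I. sentence (p i)"
  shows "(\<forall>M :: 'a lstr. unital_lgroup M \<longrightarrow> valid_in M Top (Disj I p)) \<longleftrightarrow>
    (\<exists>J\<subseteq>I. finite J \<and> (\<forall>M :: 'a lstr. unital_lgroup M \<longrightarrow> valid_in M Top (Disj J p)))"
proof
  assume "\<forall>M :: 'a lstr. unital_lgroup M \<longrightarrow> valid_in M Top (Disj I p)"
  then obtain i where "i \<in> I" "\<forall>M :: 'a lstr. unital_lgroup M \<longrightarrow> valid_in M Top (p i)"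
    using valid_Disj_sentences_imp_valid[OF assms] by blast
  then show "\<exists>J\<subseteq>I. finite J \<and> (\<forall>M :: 'a lstr. unital_lgroup M \<longrightarrow> valid_in M Top (Disj J p))"
    by (intro exI[of _ "{i}"]) (auto simp: valid_in_def)
qed (fastforce simp: valid_in_def)

theorem theorem5p9:
  assumes "infinite (UNIV :: 'i set)" and "infinite (UNIV :: 'a set)"
  shows
   "(\<forall>(p :: 'i fm) q.
       (\<forall>M :: 'a lstr. unital_lgroup M \<longrightarrow> valid_in M p q) \<longleftrightarrow> Lu_prov p q)
    \<and>
    (\<forall>(I :: 'i set) (phi :: 'i \<Rightarrow> 'i fm). (\<forall>i\<in>I. sentence (phi i)) \<longrightarrow>
       (Lu_prov Top (Disj I phi) \<longleftrightarrow>
          (\<exists>J\<subseteq>I. finite J \<and> Lu_prov Top (Disj J phi))) \<and>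
       ((\<forall>M :: 'a lstr. unital_lgroup M \<longrightarrow> valid_in M Top (Disj I phi)) \<longleftrightarrow>
          (\<exists>J\<subseteq>I. finite J \<and>
             (\<forall>M :: 'a lstr. unital_lgroup M \<longrightarrow> valid_in M Top (Disj J phi)))))"
proof -
  have completeness: "(\<forall>M :: 'a lstr. unital_lgroup M \<longrightarrow> valid_in M p q) \<longleftrightarrow> Lu_prov p q"
    for p q :: "'i fm"
    using Lu_prov_if_valid[OF assms] valid_if_Lu_prov by blast
  show ?thesis
  proof (intro conjI allI impI)
    fix p q :: "'i fm"
    show "(\<forall>M :: 'a lstr. unital_lgroup M \<longrightarrow> valid_in M p q) \<longleftrightarrow> Lu_prov p q"
      by (rule completeness)
  next
    fix I :: "'i set" and phi :: "'i \<Rightarrow> 'i fm"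
    assume "\<forall>i\<in>I. sentence (phi i)"
    note compactness = valid_Disj_sentences_finite_iff[OF assms(2) this]
    then show "Lu_prov Top (Disj I phi) \<longleftrightarrow> (\<exists>J\<subseteq>I. finite J \<and> Lu_prov Top (Disj J phi))"
      unfolding completeness .
    show "(\<forall>M :: 'a lstr. unital_lgroup M \<longrightarrow> valid_in M Top (Disj I phi)) \<longleftrightarrow>
      (\<exists>J\<subseteq>I. finite J \<and> (\<forall>M :: 'a lstr. unital_lgroup M \<longrightarrow> valid_in M Top (Disj J phi)))"
      by (rule compactness)
  qed
qed

end
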